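(* Let $(\mathfrak H_{-,+},\mathfrak H,G,W)$ be a reduction tuple for $A^*$, and define $\Gamma_0\psi:=G\psi_2$ and $\Gamma_1\psi:=\mathrm iWG\psi_1$ for $\psi=\{\psi_1,\psi_2\}\in(\mathrm{dom}A^* )^2$. Then $(\mathfrak H_{-,+},\mathfrak H,\Gamma_0,\Gamma_1)$ is an m-boundary tuple for $M^*$.
   Context: $A$ is a closed densely defined symmetric operator in a Hilbert space $\mathfrak X$; $S$ a bounded uniformly positive selfadjoint operator in $\mathfrak X\oplus\mathfrak X$; $\mathfrak X^{2,S}$ is $\mathfrak X\oplus\mathfrak X$ with the inner product $(S\cdot|\cdot)_{\mathfrak X^2}$. $M\{\psi_1,\psi_2\}:=S^{-1}\{\mathrm iA\psi_2,-\mathrm iA\psi_1\}$ on $(\mathrm{dom}A)^2$ is closed symmetric in $\mathfrak X^{2,S}$ with adjoint $M^*\{\psi_1,\psi_2\}=S^{-1}\{\mathrm iA^*\psi_2,-\mathrm iA^*\psi_1\}$ on $(\mathrm{dom}A^* )^2$. Mixed-order duality: Hilbert spaces $\mathfrak H,\mathfrak H_{-,+},\mathfrak H_{+,-}$ with $\widetilde{\mathfrak H}_{\mp,\pm}:=\mathfrak H\cap\mathfrak H_{\mp,\pm}$ dense in $\mathfrak H$ and $\mathfrak H_{\mp,\pm}$, forms $\|h\|^2_{\mathfrak H_{\mp,\pm}}$ on $\widetilde{\mathfrak H}_{\mp,\pm}$ closed in $\mathfrak H$, and $\|h\|_{\mathfrak H_{\pm,\mp}}=\sup_{0\ne g\in\widetilde{\mathfrak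 H}_{\mp,\pm}}|(g|h)_{\mathfrak H}|/\|g\|_{\mathfrak H_{\mp,\pm}}$ for $h\in\widetilde{\mathfrak H}_{\pm,\mp}$. $\langle\cdot|\cdot\rangle_{\mathfrak H}$ is the unique bounded sesquilinear extension of $(\cdot|\cdot)_{\mathfrak H}$ to $\mathfrak H_{-,+}\times\mathfrak H_{+,-}$, with $\langle h_{+,-}|h_{-,+}\rangle_{\mathfrak H}:=\overline{\langle h_{-,+}|h_{+,-}\rangle_{\mathfrak H}}$. A reduction tuple for $A^*$: $G:\mathrm{dom}A^*\to\mathfrak H_{-,+}$ linear surjective, $W:\mathfrak H_{-,+}\to\mathfrak H_{+,-}$ a linear homeomorphism, and $(A^*f|g)_{\mathfrak X}-(f|A^*g)_{\mathfrak X}=\langle Gf|WGg\rangle_{\mathfrak H}$ for $f,g\in\mathrm{dom}A^*$. An m-boundary tuple for a closed densely defined symmetric $\mathcal A$'s adjoint $\mathcal A^*$ (here $\mathcal A=M$ in $\mathfrak X^{2,S}$) is $(\mathfrak H_{-,+},\mathfrak H,\Gamma_0,\Gamma_1)$ with linear $\Gamma_0:\mathrm{dom}\mathcal A^*\to\mathfrak H_{-,+}$, $\Gamma_1:\mathrm{dom}\mathcal A^*\to\mathfrak H_{+,-}$ such that (M1) $f\mapsto\{\Gamma_0f,\Gamma_1f\}$ maps $\mathrm{dom}\mathcal A^*$ onto $\mathfrak H_{-,+}\oplus\mathfrak H_{+,-}$ and (M2) $(\mathcal A^*f|g)-(f|\mathcal A^*g)=\langle\Gamma_1f|\Gamma_0g\rangle_{\mathfrak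 H}-\langle\Gamma_0f|\Gamma_1g\rangle_{\mathfrak H}$ for all $f,g\in\mathrm{dom}\mathcal A^*$. *)

theory Defs
  imports "HOL-Analysis.Analysis"
begin

(* Conventions: complex vector spaces are modelled by an ambient abelian group with a
   complex scalar multiplication sc satisfying the HOL module axioms ('module sc').
   Inner products ip :: 'a => 'a => complex are linear in the first and conjugate-linear
   in the second argument. Subspaces carry their own inner products. *)

definition cnorm :: "('a \<Rightarrow> 'a \<Rightarrow> complex) \<Rightarrow> 'a \<Rightarrow> real" where
  "cnorm ip x = sqrt (Re (ip x x))"

definition linear_on ::
  "(complex \<Rightarrow> 'a::ab_group_add \<Rightarrow> 'a) \<Rightarrow> (complex \<Rightarrow> 'b::ab_group_add \<Rightarrow> 'b) \<Rightarrow> 'a set \<Rightarrow> ('a \<Rightarrow> 'b) \<Rightarrow> bool" where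
  "linear_on sc1 sc2 V f \<longleftrightarrow>
     (\<forall>x\<in>V. \<forall>y\<in>V. f (x + y) = f x + f y) \<and> (\<forall>c. \<forall>x\<in>V. f (sc1 c x) = sc2 c (f x))"

definition sesquilinear_on ::
  "(complex \<Rightarrow> 'a::ab_group_add \<Rightarrow> 'a) \<Rightarrow> 'a set \<Rightarrow> 'a set \<Rightarrow> ('a \<Rightarrow> 'a \<Rightarrow> complex) \<Rightarrow> bool" where
  "sesquilinear_on sc V U b \<longleftrightarrow>
     (\<forall>x\<in>V. \<forall>x'\<in>V. \<forall>y\<in>U. b (x + x') y = b x y + b x' y) \<and>
     (\<forall>c. \<forall>x\<in>V. \<forall>y\<in>U. b (sc c x) y = c * b x y) \<and>
     (\<forall>x\<in>V. \<forall>y\<in>U. \<forall>y'\<in>U. b x (y + y') = b x y + b x y') \<and>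
     (\<forall>c. \<forall>x\<in>V. \<forall>y\<in>U. b x (sc c y) = cnj c * b x y)"

definition inner_product_on ::
  "(complex \<Rightarrow> 'a::ab_group_add \<Rightarrow> 'a) \<Rightarrow> 'a set \<Rightarrow> ('a \<Rightarrow> 'a \<Rightarrow> complex) \<Rightarrow> bool" where
  "inner_product_on sc V ip \<longleftrightarrow> sesquilinear_on sc V V ip \<and>
     (\<forall>x\<in>V. \<forall>y\<in>V. ip y x = cnj (ip x y)) \<and>
     (\<forall>x\<in>V. 0 \<le> Re (ip x x) \<and> (ip x x = 0 \<longrightarrow> x = 0))"

definition conv_in :: "('a::ab_group_add \<Rightarrow> 'a \<Rightarrow> complex) \<Rightarrow> (nat \<Rightarrow> 'a) \<Rightarrow> 'a \<Rightarrow> bool" where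
  "conv_in ip X x \<longleftrightarrow> (\<forall>e>0. \<exists>N. \<forall>n\<ge>N. cnorm ip (X n - x) < e)"

definition cauchy_in :: "('a::ab_group_add \<Rightarrow> 'a \<Rightarrow> complex) \<Rightarrow> (nat \<Rightarrow> 'a) \<Rightarrow> bool" where
  "cauchy_in ip X \<longleftrightarrow> (\<forall>e>0. \<exists>N. \<forall>m\<ge>N. \<forall>n\<ge>N. cnorm ip (X m - X n) < e)"

definition complete_on :: "('a::ab_group_add \<Rightarrow> 'a \<Rightarrow> complex) \<Rightarrow> 'a set \<Rightarrow> bool" where
  "complete_on ip V \<longleftrightarrow>
     (\<forall>X. (\<forall>n. X n \<in> V) \<and> cauchy_in ip X \<longrightarrow> (\<exists>x\<in>V. conv_in ip X x))"

definition hilbert_on ::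
  "(complex \<Rightarrow> 'a::ab_group_add \<Rightarrow> 'a) \<Rightarrow> 'a set \<Rightarrow> ('a \<Rightarrow> 'a \<Rightarrow> complex) \<Rightarrow> bool" where
  "hilbert_on sc V ip \<longleftrightarrow> module sc \<and> module.subspace sc V \<and> inner_product_on sc V ip \<and> complete_on ip V"

definition dense_in :: "('a::ab_group_add \<Rightarrow> 'a \<Rightarrow> complex) \<Rightarrow> 'a set \<Rightarrow> 'a set \<Rightarrow> bool" where
  "dense_in ip V D \<longleftrightarrow> D \<subseteq> V \<and> (\<forall>x\<in>V. \<forall>e>0. \<exists>d\<in>D. cnorm ip (x - d) < e)"

definition cont_on ::
  "('a::ab_group_add \<Rightarrow> 'a \<Rightarrow> complex) \<Rightarrow> 'a set \<Rightarrow> ('b::ab_group_add \<Rightarrow> 'b \<Rightarrow> complex) \<Rightarrow> ('a \<Rightarrow> 'b) \<Rightarrow> bool" where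
  "cont_on ip1 V ip2 f \<longleftrightarrow>
     (\<forall>x\<in>V. \<forall>e>0. \<exists>d>0. \<forall>y\<in>V. cnorm ip1 (y - x) < d \<longrightarrow> cnorm ip2 (f y - f x) < e)"

definition lin_homeo ::
  "(complex \<Rightarrow> 'a::ab_group_add \<Rightarrow> 'a) \<Rightarrow> 'a set \<Rightarrow> ('a \<Rightarrow> 'a \<Rightarrow> complex) \<Rightarrow> 'a set \<Rightarrow> ('a \<Rightarrow> 'a \<Rightarrow> complex) \<Rightarrow> ('a \<Rightarrow> 'a) \<Rightarrow> bool" where
  "lin_homeo sc V ip1 U ip2 W \<longleftrightarrow> linear_on sc sc V W \<and> bij_betw W V U \<and>
     cont_on ip1 V ip2 W \<and> cont_on ip2 U ip1 (inv_into V W)"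

(* the nonnegative form q[h] = ||h||_q^2 with domain D is closed in the Hilbert space (H, ipH) *)
definition closed_form ::
  "('a::ab_group_add \<Rightarrow> 'a \<Rightarrow> complex) \<Rightarrow> 'a set \<Rightarrow> ('a \<Rightarrow> 'a \<Rightarrow> complex) \<Rightarrow> 'a set \<Rightarrow> bool" where
  "closed_form ipH H ipq D \<longleftrightarrow>
     (\<forall>X h. (\<forall>n. X n \<in> D) \<and> h \<in> H \<and> conv_in ipH X h \<and> cauchy_in ipq X
        \<longrightarrow> h \<in> D \<and> conv_in ipq X h)"

(* mixed-order duality of H, H_{-,+} (Hmp), H_{+,-} (Hpm) *)
definition mixed_order_duality ::
  "(complex \<Rightarrow> 'a::ab_group_add \<Rightarrow> 'a) \<Rightarrow> 'a set \<Rightarrow> ('a \<Rightarrow> 'a \<Rightarrow> complex) \<Rightarrow>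
   'a set \<Rightarrow> ('a \<Rightarrow> 'a \<Rightarrow> complex) \<Rightarrow> 'a set \<Rightarrow> ('a \<Rightarrow> 'a \<Rightarrow> complex) \<Rightarrow> bool" where
  "mixed_order_duality sc H ipH Hmp ipmp Hpm ippm \<longleftrightarrow>
     hilbert_on sc H ipH \<and> hilbert_on sc Hmp ipmp \<and> hilbert_on sc Hpm ippm \<and>
     dense_in ipH H (H \<inter> Hmp) \<and> dense_in ipmp Hmp (H \<inter> Hmp) \<and>
     dense_in ipH H (H \<inter> Hpm) \<and> dense_in ippm Hpm (H \<inter> Hpm) \<and>
     closed_form ipH H ipmp (H \<inter> Hmp) \<and> closed_form ipH H ippm (H \<inter> Hpm) \<and>
     (\<forall>h\<in>H \<inter> Hpm. cnorm ippm h = (SUP g\<in>(H \<inter> Hmp) - {0}. cmod (ipH g h) / cnorm ipmp g)) \<and>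
     (\<forall>h\<in>H \<inter> Hmp. cnorm ipmp h = (SUP g\<in>(H \<inter> Hpm) - {0}. cmod (ipH g h) / cnorm ippm g))"

(* P = <.|.>_H : the (unique) bounded sesquilinear extension of (.|.)_H to H_{-,+} x H_{+,-} *)
definition extended_pairing ::
  "(complex \<Rightarrow> 'a::ab_group_add \<Rightarrow> 'a) \<Rightarrow> 'a set \<Rightarrow> ('a \<Rightarrow> 'a \<Rightarrow> complex) \<Rightarrow>
   'a set \<Rightarrow> ('a \<Rightarrow> 'a \<Rightarrow> complex) \<Rightarrow> 'a set \<Rightarrow> ('a \<Rightarrow> 'a \<Rightarrow> complex) \<Rightarrow> ('a \<Rightarrow> 'a \<Rightarrow> complex) \<Rightarrow> bool" where
  "extended_pairing sc H ipH Hmp ipmp Hpm ippm P \<longleftrightarrow>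
     sesquilinear_on sc Hmp Hpm P \<and>
     (\<exists>C. \<forall>x\<in>Hmp. \<forall>y\<in>Hpm. cmod (P x y) \<le> C * cnorm ipmp x * cnorm ippm y) \<and>
     (\<forall>x\<in>H \<inter> Hmp. \<forall>y\<in>H \<inter> Hpm. P x y = ipH x y)"

(* operators in the Hilbert space X (the whole ambient type) *)
definition lin_op :: "(complex \<Rightarrow> 'a::ab_group_add \<Rightarrow> 'a) \<Rightarrow> 'a set \<Rightarrow> ('a \<Rightarrow> 'a) \<Rightarrow> bool" where
  "lin_op sc D A \<longleftrightarrow> module.subspace sc D \<and> linear_on sc sc D A"

definition closed_op :: "('a::ab_group_add \<Rightarrow> 'a \<Rightarrow> complex) \<Rightarrow> 'a set \<Rightarrow> ('a \<Rightarrow> 'a) \<Rightarrow> bool" where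
  "closed_op ip D A \<longleftrightarrow>
     (\<forall>X f g. (\<forall>n. X n \<in> D) \<and> conv_in ip X f \<and> conv_in ip (\<lambda>n. A (X n)) g \<longrightarrow> f \<in> D \<and> A f = g)"

definition symmetric_op :: "('a \<Rightarrow> 'a \<Rightarrow> complex) \<Rightarrow> 'a set \<Rightarrow> ('a \<Rightarrow> 'a) \<Rightarrow> bool" where
  "symmetric_op ip D A \<longleftrightarrow> (\<forall>f\<in>D. \<forall>g\<in>D. ip (A f) g = ip f (A g))"

definition is_adjoint :: "('a \<Rightarrow> 'a \<Rightarrow> complex) \<Rightarrow> 'a set \<Rightarrow> ('a \<Rightarrow> 'a) \<Rightarrow> 'a set \<Rightarrow> ('a \<Rightarrow> 'a) \<Rightarrow> bool" where
  "is_adjoint ip D A Ds As \<longleftrightarrow>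
     Ds = {g. \<exists>h. \<forall>f\<in>D. ip (A f) g = ip f h} \<and> (\<forall>g\<in>Ds. \<forall>f\<in>D. ip (A f) g = ip f (As g))"

definition sc2 :: "(complex \<Rightarrow> 'a \<Rightarrow> 'a) \<Rightarrow> complex \<Rightarrow> 'a \<times> 'a \<Rightarrow> 'a \<times> 'a" where
  "sc2 sc c u = (sc c (fst u), sc c (snd u))"

definition ip2 :: "('a \<Rightarrow> 'a \<Rightarrow> complex) \<Rightarrow> 'a \<times> 'a \<Rightarrow> 'a \<times> 'a \<Rightarrow> complex" where
  "ip2 ip u v = ip (fst u) (fst v) + ip (snd u) (snd v)"

definition ipS :: "('a \<Rightarrow> 'a \<Rightarrow> complex) \<Rightarrow> ('a \<times> 'a \<Rightarrow> 'a \<times> 'a) \<Rightarrow> 'a \<times> 'a \<Rightarrow> 'a \<times> 'a \<Rightarrow> complex" where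
  "ipS ip S u v = ip2 ip (S u) v"

definition bounded_uniformly_positive_selfadjoint ::
  "(complex \<Rightarrow> 'a::ab_group_add \<Rightarrow> 'a) \<Rightarrow> ('a \<Rightarrow> 'a \<Rightarrow> complex) \<Rightarrow> ('a \<times> 'a \<Rightarrow> 'a \<times> 'a) \<Rightarrow> bool" where
  "bounded_uniformly_positive_selfadjoint sc ip S \<longleftrightarrow>
     linear_on (sc2 sc) (sc2 sc) UNIV S \<and>
     (\<exists>C. \<forall>u. cnorm (ip2 ip) (S u) \<le> C * cnorm (ip2 ip) u) \<and>
     (\<forall>u v. ip2 ip (S u) v = ip2 ip u (S v)) \<and>
     (\<exists>c>0. \<forall>u. c * (cnorm (ip2 ip) u) ^ 2 \<le> Re (ip2 ip (S u) u))"

definition Mstar :: "(complex \<Rightarrow> 'a \<Rightarrow> 'a) \<Rightarrow> ('a \<times> 'a \<Rightarrow> 'a \<times> 'a) \<Rightarrow> ('a \<Rightarrow> 'a) \<Rightarrow> 'a \<times> 'a \<Rightarrow> 'a \<times> 'a" where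
  "Mstar sc S As psi = inv S (sc \<i> (As (snd psi)), sc (- \<i>) (As (fst psi)))"

definition reduction_tuple ::
  "(complex \<Rightarrow> 'x::ab_group_add \<Rightarrow> 'x) \<Rightarrow> ('x \<Rightarrow> 'x \<Rightarrow> complex) \<Rightarrow> 'x set \<Rightarrow> ('x \<Rightarrow> 'x) \<Rightarrow>
   (complex \<Rightarrow> 'h::ab_group_add \<Rightarrow> 'h) \<Rightarrow> 'h set \<Rightarrow> ('h \<Rightarrow> 'h \<Rightarrow> complex) \<Rightarrow> 'h set \<Rightarrow> ('h \<Rightarrow> 'h \<Rightarrow> complex) \<Rightarrow>
   ('h \<Rightarrow> 'h \<Rightarrow> complex) \<Rightarrow> ('x \<Rightarrow> 'h) \<Rightarrow> ('h \<Rightarrow> 'h) \<Rightarrow> bool" where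
  "reduction_tuple scX ipX DAs As sch Hmp ipmp Hpm ippm P G W \<longleftrightarrow>
     linear_on scX sch DAs G \<and> G ` DAs = Hmp \<and> lin_homeo sch Hmp ipmp Hpm ippm W \<and>
     (\<forall>f\<in>DAs. \<forall>g\<in>DAs. ipX (As f) g - ipX f (As g) = P (G f) (W (G g)))"

(* m-boundary tuple (Hmp, H, Gamma0, Gamma1) for the adjoint (domain Dst, action Ast) in the
   space with inner product ipY; <Gamma1 f | Gamma0 g>_H := cnj (P (Gamma0 g) (Gamma1 f)) *)
definition m_boundary_tuple ::
  "(complex \<Rightarrow> 'y::ab_group_add \<Rightarrow> 'y) \<Rightarrow> ('y \<Rightarrow> 'y \<Rightarrow> complex) \<Rightarrow> 'y set \<Rightarrow> ('y \<Rightarrow> 'y) \<Rightarrow>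
   (complex \<Rightarrow> 'h::ab_group_add \<Rightarrow> 'h) \<Rightarrow> 'h set \<Rightarrow> 'h set \<Rightarrow>
   ('h \<Rightarrow> 'h \<Rightarrow> complex) \<Rightarrow> ('y \<Rightarrow> 'h) \<Rightarrow> ('y \<Rightarrow> 'h) \<Rightarrow> bool" where
  "m_boundary_tuple scY ipY Dst Ast sch Hmp Hpm P Gamma0 Gamma1 \<longleftrightarrow>
     linear_on scY sch Dst Gamma0 \<and> linear_on scY sch Dst Gamma1 \<and>
     (\<forall>f\<in>Dst. Gamma0 f \<in> Hmp \<and> Gamma1 f \<in> Hpm) \<and>
     (\<forall>a\<in>Hmp. \<forall>b\<in>Hpm. \<exists>f\<in>Dst. Gamma0 f = a \<and> Gamma1 f = b) \<and>
     (\<forall>f\<in>Dst. \<forall>g\<in>Dst. ipY (Ast f) g - ipY f (Ast g) =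
        cnj (P (Gamma0 g) (Gamma1 f)) - P (Gamma0 f) (Gamma1 g))"

end

theory Submission
  imports Defs
begin

(* Since S is selfadjoint, S^{-1} cancels in the S-inner product, so Green's identity for M^*
   splits into i times the boundary form of A^* on (psi_2, phi_1) minus i times the one on
   (psi_1, phi_2); the reduction tuple turns both into pairings <G .|W G .>, and the skew
   symmetry of the boundary form moves the second one into the shape of (M2).
   Surjectivity (M1) holds because Gamma_0 and Gamma_1 see different components and
   i W G maps dom A^* onto H_{+,-}. *)

lemma linear_on_comp:
  assumes "linear_on s1 s2 V f" and "f ` V \<subseteq> U" and "linear_on s2 s3 U g"
  shows "linear_on s1 s3 V (g \<circ> f)"
  using assms by (auto simp: linear_on_def image_subset_iff)

lemma linear_on_scale:
  assumes "module sc"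
  shows "linear_on sc sc V (sc c)"
  using module.scale_right_distrib[OF assms] module.scale_left_commute[OF assms]
  by (simp add: linear_on_def)

lemma linear_on_fst: "linear_on (sc2 sc) sc V fst"
  by (simp add: linear_on_def sc2_def)

lemma linear_on_snd: "linear_on (sc2 sc) sc V snd"
  by (simp add: linear_on_def sc2_def)

lemma scale_image_subspace:
  fixes sc :: "'s::field \<Rightarrow> 'a::ab_group_add \<Rightarrow> 'a"
  assumes "module sc" and "module.subspace sc U" and "c \<noteq> 0"
  shows "sc c ` U = U"
proof
  show "sc c ` U \<subseteq> U"
    using module.subspace_scale[OF assms(1,2)] by blast
  show "U \<subseteq> sc c ` U"
  proof
    fix x assume "x \<in> U"
    moreover have "x = sc c (sc (inverse c) x)"
      using assms(3) by (simp add: module.scale_scale[OF assms(1)] module.scale_one[OF assms(1)])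
    ultimately show "x \<in> sc c ` U"
      using module.subspace_scale[OF assms(1,2)] by blast
  qed
qed

lemma ipS_Mstar_commutator:
  assumes ip_sesq: "sesquilinear_on sc UNIV UNIV ip"
    and S_selfadj: "\<And>u v. ip2 ip (S u) v = ip2 ip u (S v)"
    and "bij S"
  shows "ipS ip S (Mstar sc S As (f1, f2)) (g1, g2) - ipS ip S (f1, f2) (Mstar sc S As (g1, g2)) =
    \<i> * (ip (As f2) g1 - ip f2 (As g1)) - \<i> * (ip (As f1) g2 - ip f1 (As g2))"
proof -
  have S_Mstar: "S (Mstar sc S As (p1, p2)) = (sc \<i> (As p2), sc (- \<i>) (As p1))" for p1 p2
    using \<open>bij S\<close> by (simp add: Mstar_def bij_is_surj surj_f_inv_f)
  have "ipS ip S (Mstar sc S As (f1, f2)) (g1, g2) = \<i> * ip (As f2) g1 - \<i> * ip (As f1) g2"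
    using ip_sesq by (simp add: ipS_def S_Mstar ip2_def sesquilinear_on_def)
  moreover have "ipS ip S (f1, f2) (Mstar sc S As (g1, g2)) = \<i> * ip f2 (As g1) - \<i> * ip f1 (As g2)"
  proof -
    have "ipS ip S (f1, f2) (Mstar sc S As (g1, g2)) = ip2 ip (f1, f2) (S (Mstar sc S As (g1, g2)))"
      by (simp add: ipS_def S_selfadj)
    also have "\<dots> = \<i> * ip f2 (As g1) - \<i> * ip f1 (As g2)"
      using ip_sesq by (simp add: S_Mstar ip2_def sesquilinear_on_def)
    finally show ?thesis .
  qed
  ultimately show ?thesis
    by (simp add: algebra_simps)
qed

lemma boundary_pairing_skew:
  assumes ip_herm: "\<And>x y. ip y x = cnj (ip x y)"
    and green: "\<And>f g. f \<in> D \<Longrightarrow> g \<in> D \<Longrightarrow> ip (As f) g - ip f (As g) = P (G f) (W (G g))"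
    and "f \<in> D" and "g \<in> D"
  shows "cnj (P (G g) (W (G f))) = - P (G f) (W (G g))"
proof -
  have "cnj (P (G g) (W (G f))) = cnj (ip (As g) f - ip g (As f))"
    using green assms(3,4) by simp
  also have "\<dots> = - (ip (As f) g - ip f (As g))"
    by (simp add: ip_herm[of f] ip_herm[of "As f"])
  also have "\<dots> = - P (G f) (W (G g))"
    using green assms(3,4) by simp
  finally show ?thesis .
qed

lemma reduction_tuple_onto:
  assumes red: "reduction_tuple scX ipX DAs As sch Hmp ipmp Hpm ippm P G W"
    and "module sch" and "module.subspace sch Hpm"
  shows "(\<lambda>x. sch \<i> (W (G x))) ` DAs = Hpm"
proof -
  have "G ` DAs = Hmp" and "W ` Hmp = Hpm"
    using red by (auto simp: reduction_tuple_def lin_homeo_def bij_betw_def)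
  then have "(\<lambda>x. sch \<i> (W (G x))) ` DAs = sch \<i> ` Hpm"
    by (metis image_image)
  also have "\<dots> = Hpm"
    using scale_image_subspace[OF assms(2,3)] by simp
  finally show ?thesis .
qed

lemma Mstar_green_identity:
  assumes ip_inner: "inner_product_on scX UNIV ipX"
    and S_selfadj: "\<And>u v. ip2 ipX (S u) v = ip2 ipX u (S v)"
    and "bij S"
    and red: "reduction_tuple scX ipX DAs As sch Hmp ipmp Hpm ippm P G W"
    and P_sesq: "sesquilinear_on sch Hmp Hpm P"
    and f: "f \<in> DAs \<times> DAs" and g: "g \<in> DAs \<times> DAs"
  shows "ipS ipX S (Mstar scX S As f) g - ipS ipX S f (Mstar scX S As g) =
    cnj (P (G (snd g)) (sch \<i> (W (G (fst f))))) - P (G (snd f)) (sch \<i> (W (G (fst g))))"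
proof -
  obtain f1 f2 g1 g2 where fg: "f = (f1, f2)" "g = (g1, g2)"
    and mem: "f1 \<in> DAs" "f2 \<in> DAs" "g1 \<in> DAs" "g2 \<in> DAs"
    using f g by auto
  have ip_sesq: "sesquilinear_on scX UNIV UNIV ipX"
    and ip_herm: "\<And>x y. ipX y x = cnj (ipX x y)"
    using ip_inner unfolding inner_product_on_def by blast+
  have green: "\<And>f g. f \<in> DAs \<Longrightarrow> g \<in> DAs \<Longrightarrow> ipX (As f) g - ipX f (As g) = P (G f) (W (G g))"
    and "G ` DAs = Hmp" and "W ` Hmp = Hpm"
    using red by (auto simp: reduction_tuple_def lin_homeo_def bij_betw_def)
  then have WG_mem: "\<And>x. x \<in> DAs \<Longrightarrow> W (G x) \<in> Hpm" and G_mem: "\<And>x. x \<in> DAs \<Longrightarrow> G x \<in> Hmp"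
    by auto
  have P_scale: "\<And>x y. x \<in> DAs \<Longrightarrow> y \<in> DAs \<Longrightarrow> P (G x) (sch \<i> (W (G y))) = - \<i> * P (G x) (W (G y))"
    using P_sesq G_mem WG_mem by (simp add: sesquilinear_on_def)
  have skew: "cnj (P (G g2) (W (G f1))) = - P (G f1) (W (G g2))"
    by (rule boundary_pairing_skew[where P = P and G = G and W = W, OF ip_herm green mem(1,4)])
  have "ipS ipX S (Mstar scX S As f) g - ipS ipX S f (Mstar scX S As g) =
      \<i> * P (G f2) (W (G g1)) - \<i> * P (G f1) (W (G g2))"
    using ipS_Mstar_commutator[OF ip_sesq S_selfadj \<open>bij S\<close>] green mem by (simp add: fg)
  also have "\<dots> = cnj (- \<i> * P (G g2) (W (G f1))) + \<i> * P (G f2) (W (G g1))"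
    by (simp add: skew)
  also have "\<dots> = cnj (P (G (snd g)) (sch \<i> (W (G (fst f))))) - P (G (snd f)) (sch \<i> (W (G (fst g))))"
    using mem by (simp add: fg P_scale)
  finally show ?thesis .
qed

theorem proposition6p1:
  fixes scX :: "complex \<Rightarrow> 'x::ab_group_add \<Rightarrow> 'x" and ipX :: "'x \<Rightarrow> 'x \<Rightarrow> complex"
    and DA DAs :: "'x set" and A As :: "'x \<Rightarrow> 'x"
    and S :: "'x \<times> 'x \<Rightarrow> 'x \<times> 'x"
    and sch :: "complex \<Rightarrow> 'h::ab_group_add \<Rightarrow> 'h"
    and H Hmp Hpm :: "'h set" and ipH ipmp ippm P :: "'h \<Rightarrow> 'h \<Rightarrow> complex"
    and G :: "'x \<Rightarrow> 'h" and W :: "'h \<Rightarrow> 'h"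
  assumes X_hilbert: "hilbert_on scX UNIV ipX"
    and A_op: "lin_op scX DA A"
    and A_dense: "dense_in ipX UNIV DA"
    and A_closed: "closed_op ipX DA A"
    and A_sym: "symmetric_op ipX DA A"
    and A_adj: "is_adjoint ipX DA A DAs As"
    and S_props: "bounded_uniformly_positive_selfadjoint scX ipX S"
    and S_inv: "bij S"
    and duality: "mixed_order_duality sch H ipH Hmp ipmp Hpm ippm"
    and pairing: "extended_pairing sch H ipH Hmp ipmp Hpm ippm P"
    and red: "reduction_tuple scX ipX DAs As sch Hmp ipmp Hpm ippm P G W"
  shows "m_boundary_tuple (sc2 scX) (ipS ipX S) (DAs \<times> DAs) (Mstar scX S As)
           sch Hmp Hpm P (\<lambda>psi. G (snd psi)) (\<lambda>psi. sch \<i> (W (G (fst psi))))"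
proof -
  have sch_module: "module sch" and "module.subspace sch Hpm"
    using duality by (auto simp: mixed_order_duality_def hilbert_on_def)
  have ip_inner: "inner_product_on scX UNIV ipX"
    using X_hilbert by (simp add: hilbert_on_def)
  have S_selfadj: "\<And>u v. ip2 ipX (S u) v = ip2 ipX u (S v)"
    using S_props unfolding bounded_uniformly_positive_selfadjoint_def by blast
  have P_sesq: "sesquilinear_on sch Hmp Hpm P"
    using pairing by (simp add: extended_pairing_def)
  have G_lin: "linear_on scX sch DAs G" and G_onto: "G ` DAs = Hmp"
    and W_lin: "linear_on sch sch Hmp W"
    using red by (auto simp: reduction_tuple_def lin_homeo_def)
  have iWG_onto: "(\<lambda>x. sch \<i> (W (G x))) ` DAs = Hpm"
    using reduction_tuple_onto[OF red sch_module \<open>module.subspace sch Hpm\<close>] .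
  have Gamma0_lin: "linear_on (sc2 scX) sch (DAs \<times> DAs) (G \<circ> snd)"
    by (rule linear_on_comp[OF linear_on_snd _ G_lin]) auto
  have "linear_on (sc2 scX) sch (DAs \<times> DAs) (G \<circ> fst)"
    by (rule linear_on_comp[OF linear_on_fst _ G_lin]) auto
  then have "linear_on (sc2 scX) sch (DAs \<times> DAs) (W \<circ> (G \<circ> fst))"
    by (rule linear_on_comp[OF _ _ W_lin]) (use G_onto in auto)
  then have Gamma1_lin: "linear_on (sc2 scX) sch (DAs \<times> DAs) (sch \<i> \<circ> (W \<circ> (G \<circ> fst)))"
    by (rule linear_on_comp[OF _ _ linear_on_scale[OF sch_module, where V = UNIV]]) simp
  show ?thesis
    unfolding m_boundary_tuple_def comp_def
    using Gamma0_lin Gamma1_lin G_onto iWG_onto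
      Mstar_green_identity[OF ip_inner S_selfadj S_inv red P_sesq]
    by (fastforce simp: image_iff comp_def)
qed

end
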